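(* Let $N\ge K\ge1$, $\mathbf{H}\in\mathbb{R}^{N\times K}$ full column rank, with orthonormal eigenvectors $\mathbf{u}_1,\ldots,\mathbf{u}_N$ of $\mathbf{H}\mathbf{H}^T$, $\mathbf{H}\mathbf{H}^T\mathbf{u}_i=\rho_i^2\mathbf{u}_i$, $\rho_1^2\ge\cdots\ge\rho_N^2\ge0$, $\rho_1^2>\rho_N^2$. Fix positive integers $M_1,M_2,N_b$, $\sigma_x^2,\sigma_0^2>0$ and $P_{FA}\in(0,1)$, and let $\gamma=\mathbb{Q}_{F(N_b,N_b)}^{-1}(P_{FA})$. For unit vectors $\mathbf{t}_1,\mathbf{t}_2\in\mathbb{R}^N$ with $\mathbf{t}_1^T\mathbf{t}_2=0$ (corresponding to the fully-correlated design $\boldsymbol{\Phi}_s=\frac1{\sqrt M}\mathbf{1}_{M_1,1}\otimes\mathbf{t}_1^T$, $\boldsymbol{\Phi}_o=\frac1{\sqrt M}\mathbf{1}_{M_2,1}\otimes\mathbf{t}_2^T$, $M=M_1+M_2$) define $$P_D(\mathbf{t}_1,\mathbf{t}_2)=\mathbb{Q}_{F(N_b,N_b)}\Big(\frac{\sigma_0^2+M_2\sigma_x^2\mathbf{t}_2^T\mathbf{H}\mathbf{H}^T\mathbf{t}_2}{\sigma_0^2+M_1\sigma_x^2\mathbf{t}_1^T\mathbf{H}\mathbf{H}^T\mathbf{t}_1}\gamma\Big).$$ Then $(\mathbf{t}_1,\mathbf{t}_2)=(\mathbf{u}_1,\mathbf{u}_N)$ maximizes $P_D(\mathbf{t}_1,\mathbf{t}_2)$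 over all such pairs.
   Context: $\mathbb{Q}_{F(d_1,d_2)}(x)=\Pr(X>x)$ for $X$ $F$-distributed with $(d_1,d_2)$ degrees of freedom; it is continuous and strictly decreasing on $(0,\infty)$ and $\mathbb{Q}^{-1}_{F(d_1,d_2)}$ is its inverse. $\mathbf{1}_{P,1}$ is the all-ones column vector of length $P$, $\otimes$ the Kronecker product. In the paper, $P_D(\mathbf{t}_1,\mathbf{t}_2)$ is the expression used as the detection probability, at false-alarm probability $P_{FA}$, of the test $\frac{M_1\sum_n|\bar z_s[n]|^2}{M_2\sum_n|\bar z_o[n]|^2}\gtrless\gamma$ (averaged outputs of the two device groups) with this design. *)

theory Defs
  imports "HOL-Analysis.Analysis"
begin

definition F_density :: "nat \<Rightarrow> nat \<Rightarrow> real \<Rightarrow> real" where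
  "F_density d1 d2 x =
     (if x > 0 then
        sqrt ((real d1 * x) ^ d1 * real d2 ^ d2 / (real d1 * x + real d2) ^ (d1 + d2))
        / (x * Beta (real d1 / 2) (real d2 / 2))
      else 0)"

definition F_Q :: "nat \<Rightarrow> nat \<Rightarrow> real \<Rightarrow> real" where
  "F_Q d1 d2 x = (LINT t:{x<..}|lborel. F_density d1 d2 t)"

definition F_Q_inv :: "nat \<Rightarrow> nat \<Rightarrow> real \<Rightarrow> real" where
  "F_Q_inv d1 d2 p = (THE x. x > 0 \<and> F_Q d1 d2 x = p)"

definition P_D :: "real^'k^'n \<Rightarrow> nat \<Rightarrow> nat \<Rightarrow> nat \<Rightarrow> real \<Rightarrow> real \<Rightarrow> real
                    \<Rightarrow> real^'n \<Rightarrow> real^'n \<Rightarrow> real" where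
  "P_D H M1 M2 Nb sx2 s02 PFA t1 t2 =
     F_Q Nb Nb
       ((s02 + real M2 * sx2 * (t2 \<bullet> ((H ** transpose H) *v t2)))
        / (s02 + real M1 * sx2 * (t1 \<bullet> ((H ** transpose H) *v t1)))
        * F_Q_inv Nb Nb PFA)"

end

theory Submission
  imports Defs
begin

text \<open>
  The quadratic form \<open>t \<bullet> (H H\<^sup>T t)\<close> on unit vectors lies between the smallest and the largest
  eigenvalue of \<open>H H\<^sup>T\<close>, attained at \<open>u\<^sub>N\<close> and \<open>u\<^sub>1\<close>. Hence the pair \<open>(u\<^sub>1, u\<^sub>N)\<close> minimises the
  nonnegative ratio inside \<open>P_D\<close>, and the survival function of the F-distribution is
  antitone, being the tail integral of a nonnegative integrable density.
\<close>

lemma orthonormal_family_expansion: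
  fixes u :: "nat \<Rightarrow> 'a::euclidean_space"
  assumes orth: "\<And>i j. i < DIM('a) \<Longrightarrow> j < DIM('a) \<Longrightarrow> u i \<bullet> u j = (if i = j then 1 else 0)"
  shows "(\<Sum>i<DIM('a). (x \<bullet> u i) *\<^sub>R u i) = x"
proof -
  let ?B = "u ` {..<DIM('a)}"
  have inj: "inj_on u {..<DIM('a)}"
    by (rule inj_onI) (metis orth lessThan_iff zero_neq_one)
  have orthB: "pairwise orthogonal ?B"
    using orth by (auto simp: pairwise_def orthogonal_def)
  have normB: "\<And>v. v \<in> ?B \<Longrightarrow> norm v = 1"
    using orth by (auto simp: norm_eq_1)
  have "independent ?B"
    using orthB normB by (intro pairwise_orthogonal_independent) force+
  then have "UNIV \<subseteq> span ?B"
    by (rule card_ge_dim_independent[rotated]) (simp_all add: card_image[OF inj])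
  then have "(\<Sum>v\<in>?B. (x \<bullet> v) *\<^sub>R v) = x"
    using orthB normB by (intro orthonormal_basis_expand) auto
  then show ?thesis
    by (simp add: sum.reindex[OF inj])
qed

lemma orthonormal_family_parseval:
  fixes u :: "nat \<Rightarrow> 'a::euclidean_space"
  assumes orth: "\<And>i j. i < DIM('a) \<Longrightarrow> j < DIM('a) \<Longrightarrow> u i \<bullet> u j = (if i = j then 1 else 0)"
  shows "(\<Sum>i<DIM('a). (x \<bullet> u i)\<^sup>2) = (norm x)\<^sup>2"
proof -
  have "(norm x)\<^sup>2 = x \<bullet> (\<Sum>i<DIM('a). (x \<bullet> u i) *\<^sub>R u i)"
    by (simp add: orthonormal_family_expansion[OF orth] power2_norm_eq_inner)
  then show ?thesis
    by (simp add: inner_sum_right power2_eq_square)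
qed

lemma eigenbasis_quadratic_form:
  fixes u :: "nat \<Rightarrow> 'a::euclidean_space" and f :: "'a \<Rightarrow> 'a"
  assumes orth: "\<And>i j. i < DIM('a) \<Longrightarrow> j < DIM('a) \<Longrightarrow> u i \<bullet> u j = (if i = j then 1 else 0)"
    and f: "linear f"
    and eig: "\<And>i. i < DIM('a) \<Longrightarrow> f (u i) = l i *\<^sub>R u i"
  shows "x \<bullet> f x = (\<Sum>i<DIM('a). (x \<bullet> u i)\<^sup>2 * l i)"
proof -
  have "f x = f (\<Sum>i<DIM('a). (x \<bullet> u i) *\<^sub>R u i)"
    by (simp only: orthonormal_family_expansion[OF orth])
  also have "\<dots> = (\<Sum>i<DIM('a). (x \<bullet> u i) *\<^sub>R f (u i))"
    by (simp add: linear_sum[OF f] linear_cmul[OF f])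
  also have "\<dots> = (\<Sum>i<DIM('a). ((x \<bullet> u i) * l i) *\<^sub>R u i)"
    by (rule sum.cong) (simp_all add: eig)
  finally show ?thesis
    by (simp add: inner_sum_right power2_eq_square mult_ac)
qed

lemma rayleigh_quotient_between_extreme_eigenvalues:
  fixes u :: "nat \<Rightarrow> 'a::euclidean_space" and f :: "'a \<Rightarrow> 'a"
  assumes orth: "\<And>i j. i < DIM('a) \<Longrightarrow> j < DIM('a) \<Longrightarrow> u i \<bullet> u j = (if i = j then 1 else 0)"
    and f: "linear f"
    and eig: "\<And>i. i < DIM('a) \<Longrightarrow> f (u i) = l i *\<^sub>R u i"
    and sorted: "\<And>i j. i \<le> j \<Longrightarrow> j < DIM('a) \<Longrightarrow> l j \<le> l i"
    and x: "norm x = 1"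
  shows "l (DIM('a) - 1) \<le> x \<bullet> f x \<and> x \<bullet> f x \<le> l 0"
proof -
  let ?c = "\<lambda>i. (x \<bullet> u i)\<^sup>2"
  have form: "x \<bullet> f x = (\<Sum>i<DIM('a). ?c i * l i)"
    by (rule eigenbasis_quadratic_form[OF orth f eig])
  have weights: "(\<Sum>i<DIM('a). ?c i) = 1"
    using orthonormal_family_parseval[OF orth, of x] x by simp
  have "(\<Sum>i<DIM('a). ?c i * l (DIM('a) - 1)) \<le> (\<Sum>i<DIM('a). ?c i * l i)"
    by (intro sum_mono mult_left_mono sorted) auto
  moreover have "(\<Sum>i<DIM('a). ?c i * l i) \<le> (\<Sum>i<DIM('a). ?c i * l 0)"
    by (intro sum_mono mult_left_mono sorted) auto
  ultimately show ?thesis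
    by (simp add: form weights flip: sum_distrib_right)
qed

lemma set_integrable_powr_dominated:
  fixes f :: "real \<Rightarrow> real"
  assumes f: "f \<in> borel_measurable borel"
    and S: "S \<in> sets lborel"
    and powr: "(\<lambda>t. t powr p) integrable_on S"
    and bound: "\<And>x. x \<in> S \<Longrightarrow> 0 \<le> f x \<and> f x \<le> C * x powr p"
  shows "set_integrable lborel S f"
  unfolding set_integrable_def
proof (rule Bochner_Integration.integrable_bound[OF _ _ AE_I2])
  have "(\<lambda>t. t powr p) absolutely_integrable_on S"
    using powr by (subst absolutely_integrable_on_iff_nonneg) auto
  from integrable_mult_right[OF this[unfolded set_integrable_def], of C]
  show "integrable lborel (\<lambda>x. indicat_real S x *\<^sub>R (C * x powr p))"
    using S by (subst (asm) integrable_completion) (auto simp: mult_ac)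
  show "(\<lambda>x. indicat_real S x *\<^sub>R f x) \<in> borel_measurable lborel"
    using f S by measurable
  fix x
  show "norm (indicat_real S x *\<^sub>R f x) \<le> norm (indicat_real S x *\<^sub>R (C * x powr p))"
    using bound[of x] by (auto simp: indicator_def)
qed

lemma F_density_measurable [measurable]: "F_density d1 d2 \<in> borel_measurable borel"
  unfolding F_density_def by measurable

lemma F_density_nonpos: "x \<le> 0 \<Longrightarrow> F_density d1 d2 x = 0"
  by (simp add: F_density_def)

lemma F_density_nonneg: "d1 > 0 \<Longrightarrow> d2 > 0 \<Longrightarrow> F_density d1 d2 x \<ge> 0"
  by (auto simp: F_density_def Beta_def intro!: divide_nonneg_pos)

lemma F_density_equal_dof:
  assumes "x > 0"
  shows "F_density d d x = sqrt (x ^ d / (x + 1) ^ (2 * d)) / (x * Beta (real d / 2) (real d / 2))"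
proof (cases "d = 0")
  case False
  have "(real d * x) ^ d * real d ^ d = real d ^ (2 * d) * x ^ d"
    by (simp add: power_mult_distrib mult_2 power_add)
  moreover have "(real d * x + real d) ^ (d + d) = real d ^ (2 * d) * (x + 1) ^ (2 * d)"
    by (simp add: mult_2 distrib_left flip: power_mult_distrib)
  ultimately have "(real d * x) ^ d * real d ^ d / (real d * x + real d) ^ (d + d)
          = (real d ^ (2 * d) * x ^ d) / (real d ^ (2 * d) * (x + 1) ^ (2 * d))"
    by simp
  also have "\<dots> = x ^ d / (x + 1) ^ (2 * d)"
    using False by simp
  finally show ?thesis
    using assms by (simp add: F_density_def)
qed (use assms in \<open>simp add: F_density_def\<close>)

lemma equal_dof_density_kernel_bounds:
  fixes x :: real
  assumes "x > 0" "d > 0"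
  shows "x ^ d / (x + 1) ^ (2 * d) \<le> x" and "x ^ d / (x + 1) ^ (2 * d) \<le> 1 / x"
proof -
  have pos: "(x + 1) ^ (2 * d) > 0"
    using assms by simp
  have "x ^ d = x * x ^ (d - 1)"
    using assms by (cases d) auto
  also have "\<dots> \<le> x * (x + 1) ^ (2 * d)"
    using assms by (intro mult_left_mono order.trans[OF power_mono power_increasing]) auto
  finally show "x ^ d / (x + 1) ^ (2 * d) \<le> x"
    using pos by (simp add: divide_le_eq)
  have "x * x ^ d \<le> (x + 1) ^ (d + 1)"
    using assms power_mono[of x "x + 1" "d + 1"] by simp
  also have "\<dots> \<le> (x + 1) ^ (2 * d)"
    using assms by (intro power_increasing) auto
  finally show "x ^ d / (x + 1) ^ (2 * d) \<le> 1 / x"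
    using pos assms by (simp add: divide_le_eq field_simps)
qed

lemma F_density_equal_dof_le_powr:
  assumes "x > 0" "d > 0"
  defines "C \<equiv> 1 / Beta (real d / 2) (real d / 2)"
  shows "F_density d d x \<le> C * x powr (-1/2)" and "F_density d d x \<le> C * x powr (-3/2)"
proof -
  have C: "C > 0"
    using assms by (simp add: C_def Beta_def)
  let ?k = "x ^ d / (x + 1) ^ (2 * d)"
  have density: "F_density d d x = C * (sqrt ?k / x)"
    using assms by (simp add: F_density_equal_dof C_def)
  have "F_density d d x \<le> C * (sqrt x / x)"
    unfolding density using equal_dof_density_kernel_bounds(1)[OF assms(1,2)] C assms(1)
    by (intro mult_left_mono divide_right_mono) auto
  also have "sqrt x / x = x powr (-1/2)"
    using assms powr_diff[of x "1/2" 1] by (simp add: powr_half_sqrt)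
  finally show "F_density d d x \<le> C * x powr (-1/2)" .
  have "F_density d d x \<le> C * (sqrt (1 / x) / x)"
    unfolding density using equal_dof_density_kernel_bounds(2)[OF assms(1,2)] C assms(1)
    by (intro mult_left_mono divide_right_mono) auto
  also have "sqrt (1 / x) / x = x powr (-3/2)"
    using assms powr_diff[of x "-1/2" 1] powr_minus_divide[of x "1/2"]
    by (simp add: powr_half_sqrt real_sqrt_divide)
  finally show "F_density d d x \<le> C * x powr (-3/2)" .
qed

lemma F_density_equal_dof_integrable:
  assumes d: "d > 0"
  shows "integrable lborel (F_density d d)"
proof -
  define C where "C = 1 / Beta (real d / 2) (real d / 2)"
  have near_zero: "set_integrable lborel {0..1} (F_density d d)"
  proof (rule set_integrable_powr_dominated)
    show "(\<lambda>t. t powr (-1/2)) integrable_on {0..1::real}"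
      by (rule integrable_on_powr_from_0) auto
    show "0 \<le> F_density d d x \<and> F_density d d x \<le> C * x powr (-1/2)" if "x \<in> {0..1}" for x
      using that F_density_equal_dof_le_powr(1)[OF _ d] F_density_nonneg[OF d d] F_density_nonpos
      by (cases "x > 0") (auto simp: C_def)
  qed simp_all
  have near_infinity: "set_integrable lborel {1..} (F_density d d)"
  proof (rule set_integrable_powr_dominated)
    show "(\<lambda>t. t powr (-3/2)) integrable_on {1::real..}"
      using has_integral_powr_to_inf[of "-3/2" 1] by (auto simp: integrable_on_def)
    show "0 \<le> F_density d d x \<and> F_density d d x \<le> C * x powr (-3/2)" if "x \<in> {1..}" for x
      using that F_density_equal_dof_le_powr(2)[OF _ d] F_density_nonneg[OF d d] by (auto simp: C_def)
  qed simp_all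
  have "set_integrable lborel ({0..1} \<union> {1..}) (F_density d d)"
    by (intro set_integrable_Un near_zero near_infinity) auto
  moreover have "{0..1} \<union> {1..} = {0::real..}"
    by auto
  moreover have "(\<lambda>x. indicator {0..} x *\<^sub>R F_density d d x) = F_density d d"
    using F_density_nonpos[of _ d d] by (force simp: indicator_def)
  ultimately show ?thesis
    unfolding set_integrable_def by simp
qed

lemma F_Q_equal_dof_antimono:
  assumes d: "d > 0" and ab: "a \<le> b"
  shows "F_Q d d b \<le> F_Q d d a"
  unfolding F_Q_def set_lebesgue_integral_def
proof (rule integral_mono)
  have "\<And>c. integrable lborel (\<lambda>x. indicat_real {c<..} x *\<^sub>R F_density d d x)"
    by (rule integrable_mult_indicator) (simp_all add: F_density_equal_dof_integrable[OF d])
  then show "integrable lborel (\<lambda>x. indicat_real {b<..} x *\<^sub>R F_density d d x)"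
    and "integrable lborel (\<lambda>x. indicat_real {a<..} x *\<^sub>R F_density d d x)"
    by blast+
  show "indicat_real {b<..} x *\<^sub>R F_density d d x \<le> indicat_real {a<..} x *\<^sub>R F_density d d x" for x
    using ab F_density_nonneg[OF d d, of x] by (auto simp: indicator_def)
qed

lemma F_Q_nonpos: "a \<le> 0 \<Longrightarrow> F_Q d1 d2 a = F_Q d1 d2 0"
  unfolding F_Q_def set_lebesgue_integral_def
  by (rule Bochner_Integration.integral_cong) (auto simp: indicator_def F_density_nonpos)

text \<open>No sign condition on \<open>g\<close>: it will be \<open>F_Q_inv\<close>, a definite description that may be junk.\<close>

lemma F_Q_equal_dof_scaled_antimono:
  assumes "d > 0" "0 \<le> r" "r \<le> r'"
  shows "F_Q d d (r' * g) \<le> F_Q d d (r * g)"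
proof (cases "g \<ge> 0")
  case True
  then show ?thesis
    using assms by (simp add: F_Q_equal_dof_antimono mult_right_mono)
next
  case False
  then have "r * g \<le> 0" and "r' * g \<le> 0"
    using assms by (simp_all add: mult_nonneg_nonpos)
  then show ?thesis
    by (metis F_Q_nonpos order.refl)
qed

theorem corollary2:
  fixes H :: "real^'k^'n"
    and u :: "nat \<Rightarrow> real^'n"
    and rho :: "nat \<Rightarrow> real"
    and M1 M2 Nb :: nat
    and sx2 s02 PFA :: real
  assumes NK: "CARD('n) \<ge> CARD('k)"
    and full_rank: "rank H = CARD('k)"
    and orthonormal: "\<And>i j. i < CARD('n) \<Longrightarrow> j < CARD('n) \<Longrightarrow>
                         u i \<bullet> u j = (if i = j then 1 else 0)"
    and eig: "\<And>i. i < CARD('n) \<Longrightarrow> (H ** transpose H) *v u i = (rho i)\<^sup>2 *s u i"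
    and sorted: "\<And>i j. i \<le> j \<Longrightarrow> j < CARD('n) \<Longrightarrow> (rho j)\<^sup>2 \<le> (rho i)\<^sup>2"
    and gap: "(rho 0)\<^sup>2 > (rho (CARD('n) - 1))\<^sup>2"
    and M1: "M1 > 0" and M2: "M2 > 0" and Nb: "Nb > 0"
    and sx2: "sx2 > 0" and s02: "s02 > 0"
    and PFA: "0 < PFA" "PFA < 1"
  shows "\<forall>t1 t2 :: real^'n. norm t1 = 1 \<and> norm t2 = 1 \<and> t1 \<bullet> t2 = 0 \<longrightarrow>
           P_D H M1 M2 Nb sx2 s02 PFA t1 t2
             \<le> P_D H M1 M2 Nb sx2 s02 PFA (u 0) (u (CARD('n) - 1))"
proof (intro allI impI)
  fix t1 t2 :: "real^'n"
  assume t: "norm t1 = 1 \<and> norm t2 = 1 \<and> t1 \<bullet> t2 = 0"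
  let ?q = "\<lambda>v. v \<bullet> ((H ** transpose H) *v v)" and ?N = "CARD('n) - 1"
  have rayleigh: "(rho ?N)\<^sup>2 \<le> ?q t \<and> ?q t \<le> (rho 0)\<^sup>2" if "norm t = 1" for t
    using rayleigh_quotient_between_extreme_eigenvalues[where u = u and l = "\<lambda>i. (rho i)\<^sup>2",
        OF _ matrix_vector_mul_linear] orthonormal eig sorted that
    by (simp add: scalar_mult_eq_scaleR)
  have eigenvalue: "?q (u i) = (rho i)\<^sup>2" if "i < CARD('n)" for i
    using eig[OF that] orthonormal[OF that that] by (simp add: scalar_mult_eq_scaleR)
  let ?num = "\<lambda>v. s02 + M2 * sx2 * ?q v" and ?den = "\<lambda>v. s02 + M1 * sx2 * ?q v"
  have "?num (u ?N) \<le> ?num t2"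
    using rayleigh[of t2] t sx2 by (simp add: eigenvalue mult_left_mono)
  moreover have "?den t1 \<le> ?den (u 0)"
    using rayleigh[of t1] t sx2 by (simp add: eigenvalue mult_left_mono)
  moreover have "0 < ?den t1"
  proof -
    have "0 \<le> ?q t1"
      using rayleigh[of t1] t zero_le_power2[of "rho ?N"] by linarith
    then show ?thesis
      using s02 sx2 by (simp add: add_pos_nonneg)
  qed
  moreover have "0 \<le> ?num (u ?N)"
    using s02 sx2 by (simp add: eigenvalue)
  ultimately have "0 \<le> ?num (u ?N) / ?den (u 0)" and "?num (u ?N) / ?den (u 0) \<le> ?num t2 / ?den t1"
    by (simp_all add: frac_le)
  then show "P_D H M1 M2 Nb sx2 s02 PFA t1 t2 \<le> P_D H M1 M2 Nb sx2 s02 PFA (u 0) (u ?N)"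
    unfolding P_D_def by (rule F_Q_equal_dof_scaled_antimono[OF Nb])
qed

end
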